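(* For $k\in\mathbb N$ and $i\in\{1,2\}$ let $\mathcal E_k^i$ and $\tilde{\mathcal E}_k^i$ be the Hamiltonian vector fields of $h_k=\frac1k\Re\operatorname{tr}(J^k)$ and $\tilde h_k=\frac1k\Im\operatorname{tr}(J^k)$ with respect to $\{\ ,\ \}_i^{\mathrm{red}}$. Then $$\mathcal E_k^2[q_j]=\mathcal E_{k+1}^1[q_j]=\Re(J^k)_{jj},\qquad \mathcal E_k^2[J]=\mathcal E_{k+1}^1[J]=\tfrac12\big[R(q)(J^k+(J^k)^* )+((J^k)^*-J^k),J\big],$$ $$\tilde{\mathcal E}_k^2[q_j]=\tilde{\mathcal E}_{k+1}^1[q_j]=\Re(-\mathrm iJ^k)_{jj},\qquad \tilde{\mathcal E}_k^2[J]=\tilde{\mathcal E}_{k+1}^1[J]=\tfrac12\big[\mathrm iR(q)((J^k)^*-J^k)+\mathrm i(J^k+(J^k)^* ),J\big].$$ All these vector fields are tangent to the submanifold $\mathfrak M_{0,-}^{\mathrm{reg}}=\{(e^q,J)\in\mathfrak M_0^{\mathrm{reg}}:J^+=0\}$ and to $\mathfrak M_{0,+}^{\mathrm{reg}}=\{(e^q,J)\in\mathfrak M_0^{\mathrm{reg}}:J^-=0\}$. The restrictions $\mathcal V_k^i$ of $\mathcal E_k^i$ to $\mathfrak M_{0,-}^{\mathrm{reg}}$ satisfy $$\mathcal V_k^2[q_j]=\mathcal V_{k+1}^1[q_j]=((J^-)^k)_{jj},\qquad \mathcal V_k^2[J^-]=\mathcal V_{k+1}^1[J^-]=[R(q)(J^-)^k,J^-],$$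 while the restrictions of all $\tilde{\mathcal E}_k^i$ to $\mathfrak M_{0,-}^{\mathrm{reg}}$ vanish. Denoting by $\mathcal U_k^i,\tilde{\mathcal U}_k^i$ the restrictions of $\mathcal E_k^i,\tilde{\mathcal E}_k^i$ to $\mathfrak M_{0,+}^{\mathrm{reg}}$, for all $l\in\mathbb N$: $\mathcal U^2_{2l-1}=\mathcal U^1_{2l}=0$, $\tilde{\mathcal U}^2_{2l}=\tilde{\mathcal U}^1_{2l+1}=0$, and $$\mathcal U^2_{2l}[q_j]=\mathcal U^1_{2l+1}[q_j]=\Re((J^+)^{2l})_{jj},\quad \mathcal U^2_{2l}[J^+]=\mathcal U^1_{2l+1}[J^+]=[R(q)(J^+)^{2l},J^+],$$ $$\tilde{\mathcal U}^2_{2l-1}[q_j]=\tilde{\mathcal U}^1_{2l}[q_j]=\Re(-\mathrm i(J^+)^{2l-1})_{jj},\quad \tilde{\mathcal U}^2_{2l-1}[J^+]=\tilde{\mathcal U}^1_{2l}[J^+]=[-\mathrm iR(q)(J^+)^{2l-1},J^+].$$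
   Context: $\mathcal G=\mathfrak{gl}(n,\mathbb C)$ (real Lie algebra) with $\langle X,Y\rangle=\Re\operatorname{tr}(XY)$. $\mathcal G^+=\mathfrak u(n)$ (anti-Hermitian), $\mathcal G^-=\mathrm i\,\mathfrak u(n)$ (Hermitian); $X=X^++X^-$ with $X^\pm=\frac12(X\mp X^* )$; $\mathcal G^\pm_0$ are the diagonal matrices in $\mathcal G^\pm$ and $X^-_0$ denotes the diagonal part of $X^-$. $\mathfrak M_0^{\mathrm{reg}}=\{(e^q,J): J\in\mathcal G,\ q=\mathrm{diag}(q_1,\dots,q_n),\ q_i\in\mathbb R,\ q_1>\dots>q_n\}$. For $f\in C^\infty(\mathfrak M_0^{\mathrm{reg}})$: $\nabla_1f\in\mathcal G^-_0$ with $\langle\nabla_1f,X_0\rangle=\frac{d}{dt}|_0f(e^{q+tX_0},J)$ ($X_0\in\mathcal G_0^-$), $d_2f\in\mathcal G$ with $\langle d_2f,X\rangle=\frac{d}{dt}|_0f(e^q,J+tX)$, $\nabla_2f=J\,d_2f$, $\nabla_2'f=(d_2f)J$. $R(q)\in\mathrm{End}(\mathcal G)$: $(R(q)X)_{ii}=0$, $(R(q)X)_{ij}=X_{ij}\coth(q_i-q_j)$ for $i\ne j$. The following formulas define anti-symmetric bi-derivations on $C^\infty(\mathfrak M_0^{\mathrm{reg}})$ (derivatives at $(e^q,J)$): $\{f,h\}_1^{\mathrm{red}}=\langle\nabla_1f,(d_2h)^-_0\rangle-\langle\nabla_1h,(d_2f)^-_0\rangle+\langle R(q)[d_2f,J]^+,(d_2h)^-\rangle-\langle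 R(q)[d_2h,J]^+,(d_2f)^-\rangle+\langle J^+,[(d_2f)^-,(d_2h)^-]-[(d_2f)^+,(d_2h)^+]\rangle$; $2\{f,h\}_2^{\mathrm{red}}=\langle\nabla_1f,(\nabla_2h+\nabla_2'h)^-_0\rangle-\langle\nabla_1h,(\nabla_2f+\nabla_2'f)^-_0\rangle+\langle R(q)[d_2f,J]^+,(\nabla_2h+\nabla_2'h)^-\rangle-\langle R(q)[d_2h,J]^+,(\nabla_2f+\nabla_2'f)^-\rangle+\langle(\nabla_2f)^-,(\nabla_2'h)^-\rangle+\langle(\nabla_2'f)^+,(\nabla_2h)^+\rangle-\langle(\nabla_2'f)^-,(\nabla_2h)^-\rangle-\langle(\nabla_2f)^+,(\nabla_2'h)^+\rangle$. A vector field $\mathcal E$ on $\mathfrak M_0^{\mathrm{reg}}$ is encoded by the functions $\mathcal E[q]$ ($\mathcal G_0^-$-valued, with diagonal entries $\mathcal E[q_j]$) and $\mathcal E[J]$ ($\mathcal G$-valued), so that $\mathcal E[f]=\langle\nabla_1f,\mathcal E[q]\rangle+\langle d_2f,\mathcal E[J]\rangle$; we write $\mathcal E[J^\pm]=(\mathcal E[J])^\pm$. For a $\mathbb T^n$-invariant $h$ (invariant under $(e^q,J)\mapsto(e^q,\tau J\tau^{-1})$, $\tau$ diagonal unitary), its Hamiltonian vector field w.r.t. $\{\ ,\ \}_i^{\mathrm{red}}$ is the vector field $\mathcal E^i_h$ with $\mathcal E_h^i[f]=\{f,h\}_i^{\mathrm{red}}$ for all $f\in C^\infty(\mathfrak M_0^{\mathrm{reg}})$.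 *)

theory Defs
  imports "HOL-Analysis.Analysis"
begin

text \<open>Setting: the real Lie algebra gl(n,C), realised as complex matrices indexed by a
finite linearly ordered type 'n (so n = CARD('n)).  A point (e^q, J) of M_0^reg is
represented by the pair (q, J) with q the vector of diagonal entries of the real diagonal
matrix q and J a complex matrix.\<close>

type_synonym 'n cmat = "complex^'n^'n"
type_synonym 'n point = "(real^'n) \<times> 'n cmat"

definition matpow :: "'n::finite cmat \<Rightarrow> nat \<Rightarrow> 'n cmat" where
  "matpow X k = ((\<lambda>Y. X ** Y) ^^ k) (mat 1)"

definition cadj :: "'n::finite cmat \<Rightarrow> 'n cmat" where
  "cadj X = (\<chi> i j. cnj (X $ j $ i))"

definition csmul :: "complex \<Rightarrow> 'n::finite cmat \<Rightarrow> 'n cmat" where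
  "csmul c X = (\<chi> i j. c * X $ i $ j)"

definition mtrace :: "'n::finite cmat \<Rightarrow> complex" where
  "mtrace X = (\<Sum>i\<in>UNIV. X $ i $ i)"

definition ip :: "'n::finite cmat \<Rightarrow> 'n cmat \<Rightarrow> real" where
  "ip X Y = Re (mtrace (X ** Y))"

definition Hp :: "'n::finite cmat \<Rightarrow> 'n cmat" where
  "Hp X = (1/2::real) *\<^sub>R (X - cadj X)"

definition Hm :: "'n::finite cmat \<Rightarrow> 'n cmat" where
  "Hm X = (1/2::real) *\<^sub>R (X + cadj X)"

definition diagpart :: "'n::finite cmat \<Rightarrow> 'n cmat" where
  "diagpart X = (\<chi> i j. if i = j then X $ i $ j else 0)"

definition Hm0 :: "'n::finite cmat \<Rightarrow> 'n cmat" where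
  "Hm0 X = diagpart (Hm X)"

definition comm :: "'n::finite cmat \<Rightarrow> 'n cmat \<Rightarrow> 'n cmat" where
  "comm X Y = X ** Y - Y ** X"

definition G0m :: "'n::finite cmat set" where
  "G0m = {X. (\<forall>i j. i \<noteq> j \<longrightarrow> X $ i $ j = 0) \<and> (\<forall>i. Im (X $ i $ i) = 0)}"

definition diagmat :: "real^'n::finite \<Rightarrow> 'n cmat" where
  "diagmat v = (\<chi> i j. if i = j then complex_of_real (v $ i) else 0)"

definition diagvec :: "'n::finite cmat \<Rightarrow> real^'n" where
  "diagvec X = (\<chi> i. Re (X $ i $ i))"

definition coth :: "real \<Rightarrow> real" where
  "coth x = cosh x / sinh x"

definition Rq :: "real^'n::finite \<Rightarrow> 'n cmat \<Rightarrow> 'n cmat" where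
  "Rq q X = (\<chi> i j. if i = j then 0 else X $ i $ j * complex_of_real (coth (q $ i - q $ j)))"

definition M0reg :: "('n::{finite,linorder}) point set" where
  "M0reg = {(q, J). \<forall>i j. i < j \<longrightarrow> q $ j < q $ i}"

fun Ck_on :: "nat \<Rightarrow> 'a::euclidean_space set \<Rightarrow> ('a \<Rightarrow> real) \<Rightarrow> bool" where
  "Ck_on 0 S f = continuous_on S f"
| "Ck_on (Suc k) S f = ((\<forall>x\<in>S. f differentiable (at x)) \<and>
      (\<forall>b\<in>Basis. Ck_on k S (\<lambda>x. frechet_derivative f (at x) b)))"

definition smooth_on :: "'a::euclidean_space set \<Rightarrow> ('a \<Rightarrow> real) \<Rightarrow> bool" where
  "smooth_on S f = (\<forall>k. Ck_on k S f)"

definition nabla1 :: "('n::finite point \<Rightarrow> real) \<Rightarrow> 'n point \<Rightarrow> 'n cmat" where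
  "nabla1 f p = (THE Y. Y \<in> G0m \<and>
     (\<forall>X\<in>G0m. ip Y X = deriv (\<lambda>t. f (fst p + t *\<^sub>R diagvec X, snd p)) 0))"

definition d2 :: "('n::finite point \<Rightarrow> real) \<Rightarrow> 'n point \<Rightarrow> 'n cmat" where
  "d2 f p = (THE Y. \<forall>X. ip Y X = deriv (\<lambda>t. f (fst p, snd p + t *\<^sub>R X)) 0)"

definition nabla2 :: "('n::finite point \<Rightarrow> real) \<Rightarrow> 'n point \<Rightarrow> 'n cmat" where
  "nabla2 f p = snd p ** d2 f p"

definition nabla2' :: "('n::finite point \<Rightarrow> real) \<Rightarrow> 'n point \<Rightarrow> 'n cmat" where
  "nabla2' f p = d2 f p ** snd p"

definition red_bracket1 :: "('n::finite point \<Rightarrow> real) \<Rightarrow> ('n point \<Rightarrow> real) \<Rightarrow> 'n point \<Rightarrow> real" where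
  "red_bracket1 f h p = (let q = fst p; J = snd p in
      ip (nabla1 f p) (Hm0 (d2 h p)) - ip (nabla1 h p) (Hm0 (d2 f p))
    + ip (Rq q (Hp (comm (d2 f p) J))) (Hm (d2 h p))
    - ip (Rq q (Hp (comm (d2 h p) J))) (Hm (d2 f p))
    + ip (Hp J) (comm (Hm (d2 f p)) (Hm (d2 h p)) - comm (Hp (d2 f p)) (Hp (d2 h p))))"

definition red_bracket2 :: "('n::finite point \<Rightarrow> real) \<Rightarrow> ('n point \<Rightarrow> real) \<Rightarrow> 'n point \<Rightarrow> real" where
  "red_bracket2 f h p = (1/2) * (let q = fst p; J = snd p in
      ip (nabla1 f p) (Hm0 (nabla2 h p + nabla2' h p))
    - ip (nabla1 h p) (Hm0 (nabla2 f p + nabla2' f p))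
    + ip (Rq q (Hp (comm (d2 f p) J))) (Hm (nabla2 h p + nabla2' h p))
    - ip (Rq q (Hp (comm (d2 h p) J))) (Hm (nabla2 f p + nabla2' f p))
    + ip (Hm (nabla2 f p)) (Hm (nabla2' h p)) + ip (Hp (nabla2' f p)) (Hp (nabla2 h p))
    - ip (Hm (nabla2' f p)) (Hm (nabla2 h p)) - ip (Hp (nabla2 f p)) (Hp (nabla2' h p)))"

definition red_bracket :: "nat \<Rightarrow> ('n::finite point \<Rightarrow> real) \<Rightarrow> ('n point \<Rightarrow> real) \<Rightarrow> 'n point \<Rightarrow> real" where
  "red_bracket i f h p = (if i = 1 then red_bracket1 f h p else red_bracket2 f h p)"

text \<open>A vector field E is encoded by Eq (the diagonal entries E[q_j]) and EJ (= E[J]);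
  E[f] = \<langle>\<nabla>_1 f, E[q]\<rangle> + \<langle>d_2 f, E[J]\<rangle>.\<close>
definition vf_apply :: "('n::finite point \<Rightarrow> real^'n) \<Rightarrow> ('n point \<Rightarrow> 'n cmat)
    \<Rightarrow> ('n point \<Rightarrow> real) \<Rightarrow> 'n point \<Rightarrow> real" where
  "vf_apply Eq EJ f p = ip (nabla1 f p) (diagmat (Eq p)) + ip (d2 f p) (EJ p)"

definition is_ham_vf :: "nat \<Rightarrow> ('n::{finite,linorder} point \<Rightarrow> real)
    \<Rightarrow> ('n::{finite,linorder} point \<Rightarrow> real^('n::{finite,linorder}))
    \<Rightarrow> ('n::{finite,linorder} point \<Rightarrow> 'n::{finite,linorder} cmat) \<Rightarrow> bool" where
  "is_ham_vf i h Eq EJ = (\<forall>f. smooth_on M0reg f \<longrightarrow>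
      (\<forall>p\<in>M0reg. vf_apply Eq EJ f p = red_bracket i f h p))"

definition hk :: "nat \<Rightarrow> 'n::finite point \<Rightarrow> real" where
  "hk k p = (1 / real k) * Re (mtrace (matpow (snd p) k))"

definition htk :: "nat \<Rightarrow> 'n::finite point \<Rightarrow> real" where
  "htk k p = (1 / real k) * Im (mtrace (matpow (snd p) k))"

end

theory Submission
  imports Defs
begin

text \<open>Both Hamiltonians \<open>Re tr(J\<^sup>k)/k\<close> and \<open>Im tr(J\<^sup>k)/k\<close> are of the form \<open>Re tr(cJ\<^sup>k)/k\<close>
  with \<open>c = 1\<close> resp. \<open>c = -i\<close>: they do not depend on \<open>q\<close>, and their gradient \<open>d\<^sub>2h = cJ\<^sup>k\<^sup>-\<^sup>1\<close> commutes with \<open>J\<close>.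
  For a Hamiltonian with \<open>\<nabla>\<^sub>1h = 0\<close> and \<open>d\<^sub>2h = \<Phi>\<close> (first bracket), resp. \<open>J d\<^sub>2h = \<Phi>\<close>
  (second bracket), with \<open>[\<Phi>, J] = 0\<close>, skewness of \<open>R(q)\<close> and invariance of the pairing
  collapse the reduced bracket to \<open>\<langle>\<nabla>\<^sub>1f, diag Re \<Phi>\<rangle> + \<langle>d\<^sub>2f, [R(q)\<Phi>\<^sup>- - \<Phi>\<^sup>+, J]\<rangle>\<close>;
  testing against the coordinates \<open>q\<^sub>j\<close> and the linear functions \<open>\<langle>A, J\<rangle>\<close> identifies the
  vector field, and \<open>\<Phi> = cJ\<^sup>K\<close> gives the same field for \<open>h\<^sub>K\<^sub>+\<^sub>1\<close> and the first bracket as for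
  \<open>h\<^sub>K\<close> and the second one.

  On the loci \<open>J\<^sup>+ = 0\<close> and \<open>J\<^sup>- = 0\<close>, \<open>\<Phi> = cJ\<^sup>K\<close> is Hermitian or anti-Hermitian,
  according to \<open>c\<close> and the parity of \<open>K\<close>. An anti-Hermitian \<open>\<Phi>\<close> generates the zero field;
  a Hermitian one generates \<open>[R(q)\<Phi>, J]\<close>, which is Hermitian or anti-Hermitian together
  with \<open>J\<close>. This gives tangency and the restricted fields.\<close>

section \<open>Matrix algebra in gl(n, C)\<close>

lemma matpow_0 [simp]: "matpow X 0 = mat 1"
  by (simp add: matpow_def)

lemma matpow_Suc: "matpow X (Suc k) = X ** matpow X k"
  by (simp add: matpow_def)

lemma matpow_add: "matpow X (a + b) = matpow X a ** matpow X b"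
  by (induction a) (simp_all add: matpow_Suc matrix_mul_assoc)

lemma matpow_Suc': "matpow X (Suc k) = matpow X k ** X"
  using matpow_add[of X k 1] by (simp add: matpow_Suc)

lemma matpow_commute: "matpow X k ** X = X ** matpow X k"
  by (metis matpow_Suc matpow_Suc')

lemma matrix_add_rdistrib: "(B + C) ** A = B ** A + C ** (A::'n::finite cmat)"
  by (vector matrix_matrix_mult_def sum.distrib[symmetric] field_simps)

lemma matrix_diff_ldistrib: "A ** (B - C) = A ** B - A ** (C::'n::finite cmat)"
  by (vector matrix_matrix_mult_def sum_subtractf[symmetric] field_simps)

lemma matrix_diff_rdistrib: "(B - C) ** A = B ** A - C ** (A::'n::finite cmat)"
  by (vector matrix_matrix_mult_def sum_subtractf[symmetric] field_simps)

lemma matrix_mult_csmul_right: "A ** csmul c B = csmul c (A ** (B::'n::finite cmat))"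
  by (simp add: csmul_def matrix_matrix_mult_def vec_eq_iff sum_distrib_left mult.left_commute)

lemma matrix_mult_csmul_left: "csmul c B ** A = csmul c (B ** (A::'n::finite cmat))"
  by (simp add: csmul_def matrix_matrix_mult_def vec_eq_iff sum_distrib_left mult.assoc)

lemma csmul_zero [simp]: "csmul c 0 = 0"
  by (simp add: csmul_def vec_eq_iff)

lemma csmul_one [simp]: "csmul 1 X = X"
  by (simp add: csmul_def vec_eq_iff)

lemma trace_scaleR: "trace (r *\<^sub>R (A::'n::finite cmat)) = of_real r * trace A"
proof -
  have "trace (r *\<^sub>R A) = r *\<^sub>R trace A"
    by (simp add: trace_def scaleR_sum_right)
  then show ?thesis
    by (simp add: scaleR_conv_of_real)
qed

lemma trace_csmul: "trace (csmul c A) = c * trace (A::'n::finite cmat)"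
  by (simp add: trace_def csmul_def sum_distrib_left)

lemma mtrace_eq_trace: "mtrace X = trace X"
  by (simp add: mtrace_def trace_def)

lemma cadj_cadj [simp]: "cadj (cadj X) = X"
  by (simp add: cadj_def vec_eq_iff)

lemma cadj_zero [simp]: "cadj 0 = 0"
  by (simp add: cadj_def vec_eq_iff)

lemma cadj_add: "cadj (X + Y) = cadj X + cadj Y"
  by (simp add: cadj_def vec_eq_iff)

lemma cadj_diff: "cadj (X - Y) = cadj X - cadj Y"
  by (simp add: cadj_def vec_eq_iff)

lemma cadj_scaleR: "cadj (r *\<^sub>R X) = r *\<^sub>R cadj X"
  by (simp add: cadj_def vec_eq_iff)

lemma cadj_csmul: "cadj (csmul c X) = csmul (cnj c) (cadj X)"
  by (simp add: cadj_def csmul_def vec_eq_iff)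

lemma cadj_matrix_mult: "cadj (A ** B) = cadj B ** cadj (A::'n::finite cmat)"
  by (simp add: cadj_def vec_eq_iff matrix_matrix_mult_def mult.commute)

lemma cadj_mat_1 [simp]: "cadj (mat 1 :: 'n::finite cmat) = mat 1"
  by (simp add: cadj_def vec_eq_iff mat_def)

lemma cadj_matpow: "cadj (matpow X k) = matpow (cadj X) k"
  by (induction k) (simp_all add: matpow_Suc cadj_matrix_mult matpow_commute)

lemma trace_cadj: "trace (cadj X) = cnj (trace (X::'n::finite cmat))"
  by (simp add: cadj_def trace_def)

lemma Hp_Hm: "Hp X + Hm X = X"
  unfolding Hp_def Hm_def by (simp add: vec_eq_iff) (simp add: algebra_simps)

lemma Hp_eq_0_iff: "Hp X = 0 \<longleftrightarrow> cadj X = X"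
  by (auto simp: Hp_def vec_eq_iff)

lemma Hm_eq_0_iff: "Hm X = 0 \<longleftrightarrow> cadj X = - X"
  by (auto simp: Hm_def vec_eq_iff add_eq_0_iff2)

lemma Hm_hermitian: "cadj X = X \<Longrightarrow> Hm X = X"
  by (simp add: Hm_def vec_eq_iff)

lemma Hp_antihermitian: "cadj X = - X \<Longrightarrow> Hp X = X"
  by (simp add: Hp_def vec_eq_iff)

lemma cadj_Hm: "cadj (Hm X) = Hm X"
  by (simp add: Hm_def cadj_add cadj_scaleR add.commute)

lemma cadj_Hp: "cadj (Hp X) = - Hp X"
  by (simp add: Hp_def cadj_diff cadj_scaleR vec_eq_iff algebra_simps)

lemma Hm_Hm [simp]: "Hm (Hm X) = Hm X"
  by (simp add: Hm_hermitian cadj_Hm)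

lemma Hp_Hp [simp]: "Hp (Hp X) = Hp X"
  by (simp add: Hp_antihermitian cadj_Hp)

lemma Hp_zero [simp]: "Hp 0 = 0"
  by (simp add: Hp_def)

lemma Hm_zero [simp]: "Hm 0 = 0"
  by (simp add: Hm_def)

lemma Hm_add: "Hm (X + Y) = Hm X + Hm Y"
  by (simp add: Hm_def cadj_add scaleR_right_distrib[symmetric] add_ac)

lemma Hm0_add: "Hm0 (X + Y) = Hm0 X + Hm0 Y"
  by (simp add: Hm0_def Hm_add diagpart_def vec_eq_iff)

lemma Hm0_eq_diagmat: "Hm0 X = diagmat (diagvec X)"
  by (simp add: Hm0_def diagpart_def Hm_def cadj_def diagmat_def diagvec_def vec_eq_iff complex_eq_iff)

lemma hermitian_diag_real: "cadj X = X \<Longrightarrow> complex_of_real (Re (X $ j $ j)) = X $ j $ j"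
proof -
  assume "cadj X = X"
  then have "cadj X $ j $ j = X $ j $ j"
    by simp
  then have "cnj (X $ j $ j) = X $ j $ j"
    by (simp add: cadj_def)
  then show ?thesis
    by (simp add: complex_eq_iff)
qed

lemma antihermitian_diagvec: "cadj X = - X \<Longrightarrow> diagvec X = 0"
proof -
  assume "cadj X = - X"
  then have "cadj X $ j $ j = (- X) $ j $ j" for j
    by simp
  then have "cnj (X $ j $ j) = - X $ j $ j" for j
    by (simp add: cadj_def)
  then show ?thesis
    by (simp add: diagvec_def vec_eq_iff complex_eq_iff)
qed

lemma ip_zero_left [simp]: "ip 0 Z = 0"
  by (simp add: ip_def mtrace_def)

lemma ip_zero_right [simp]: "ip Z 0 = 0"
  by (simp add: ip_def mtrace_def)

lemma ip_commute: "ip X Y = ip Y X"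
  unfolding ip_def mtrace_eq_trace by (subst trace_mul_sym) (rule refl)

lemma ip_add_left: "ip (X + Y) Z = ip X Z + ip Y Z"
  by (simp add: ip_def mtrace_eq_trace matrix_add_rdistrib trace_add)

lemma ip_add_right: "ip Z (X + Y) = ip Z X + ip Z Y"
  by (simp add: ip_def mtrace_eq_trace matrix_add_ldistrib trace_add)

lemma ip_diff_left: "ip (X - Y) Z = ip X Z - ip Y Z"
  by (simp add: ip_def mtrace_eq_trace matrix_diff_rdistrib trace_sub)

lemma ip_diff_right: "ip Z (X - Y) = ip Z X - ip Z Y"
  by (simp add: ip_def mtrace_eq_trace matrix_diff_ldistrib trace_sub)

lemma ip_scaleR_right: "ip Z (r *\<^sub>R X) = r * ip Z X"
  by (simp add: ip_def mtrace_eq_trace matrix_scalar_ac trace_scaleR scalar_matrix_assoc[symmetric])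

lemma ip_scaleR_left: "ip (r *\<^sub>R X) Z = r * ip X Z"
  by (metis ip_commute ip_scaleR_right)

lemma ip_minus_right: "ip Z (- X) = - ip Z X"
  using ip_scaleR_right[of Z "-1" X] by simp

lemma ip_cadj_right: "ip X (cadj Y) = ip (cadj X) Y"
proof -
  have "ip X (cadj Y) = Re (cnj (trace (Y ** cadj X)))"
    by (simp add: ip_def mtrace_eq_trace trace_cadj[symmetric] cadj_matrix_mult)
  also have "\<dots> = ip (cadj X) Y"
    by (simp add: ip_def mtrace_eq_trace trace_mul_sym[of Y])
  finally show ?thesis .
qed

lemma ip_Hp_right: "ip X (Hp Y) = ip (Hp X) Y"
  by (simp add: Hp_def ip_diff_left ip_diff_right ip_scaleR_left ip_scaleR_right ip_cadj_right)

lemma ip_Hm_right: "ip X (Hm Y) = ip (Hm X) Y"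
  by (simp add: Hm_def ip_add_left ip_add_right ip_scaleR_left ip_scaleR_right ip_cadj_right)

lemma ip_self_cadj: "ip Z (cadj Z) = (\<Sum>i\<in>UNIV. \<Sum>k\<in>UNIV. (cmod (Z $ i $ k))\<^sup>2)"
proof -
  have "ip Z (cadj Z) = (\<Sum>i\<in>UNIV. \<Sum>k\<in>UNIV. Re (Z $ i $ k * cnj (Z $ i $ k)))"
    by (simp add: ip_def mtrace_def matrix_matrix_mult_def cadj_def Re_sum)
  then show ?thesis
    by (simp add: complex_mult_cnj cmod_power2)
qed

lemma ip_eq_imp_eq:
  assumes "\<And>X. ip Y X = ip Y' (X::'n::finite cmat)"
  shows "Y = Y'"
proof -
  define Z where "Z = Y - Y'"
  have "ip Z (cadj Z) = 0"
    using assms by (simp add: Z_def ip_diff_left)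
  then have "(\<Sum>i\<in>UNIV. \<Sum>k\<in>UNIV. (cmod (Z $ i $ k))\<^sup>2) = 0"
    by (simp add: ip_self_cadj)
  then have "\<forall>i k. (cmod (Z $ i $ k))\<^sup>2 = 0"
    by (simp add: sum_nonneg_eq_0_iff sum_nonneg)
  then show ?thesis
    by (simp add: Z_def vec_eq_iff)
qed

lemma ip_diagmat: "ip (diagmat a) (diagmat b) = (\<Sum>i\<in>UNIV. a $ i * b $ i)"
proof -
  have "ip (diagmat a) (diagmat b) = (\<Sum>i\<in>UNIV. Re (\<Sum>k\<in>UNIV.
      (if i = k then complex_of_real (a $ i) else 0) * (if k = i then complex_of_real (b $ k) else 0)))"
    by (simp add: ip_def mtrace_def matrix_matrix_mult_def diagmat_def Re_sum)
  also have "\<dots> = (\<Sum>i\<in>UNIV. a $ i * b $ i)"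
    by (intro sum.cong refl) (simp add: if_distrib if_distribR cong: if_cong)
  finally show ?thesis .
qed

lemma G0m_eq_diagmat: "X \<in> G0m \<Longrightarrow> X = diagmat (diagvec X)"
  by (auto simp: G0m_def diagmat_def diagvec_def vec_eq_iff complex_eq_iff)

lemma G0m_ip_eq_imp_eq:
  assumes "Y \<in> G0m" "Y' \<in> G0m" "\<And>X. X \<in> G0m \<Longrightarrow> ip Y X = ip Y' X"
  shows "Y = Y'"
proof -
  define Z where "Z = Y - Y'"
  have Z: "Z \<in> G0m"
    using assms by (simp add: Z_def G0m_def)
  have "ip (diagmat (diagvec Z)) (diagmat (diagvec Z)) = 0"
    using assms Z by (simp add: Z_def ip_diff_left flip: G0m_eq_diagmat)
  then have "\<forall>i. diagvec Z $ i = 0"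
    by (simp add: ip_diagmat sum_nonneg_eq_0_iff flip: power2_eq_square)
  then have "Z = 0"
    using G0m_eq_diagmat[OF Z] by (simp add: diagmat_def vec_eq_iff)
  then show ?thesis
    by (simp add: Z_def)
qed

lemma comm_add_left: "comm (A + B) C = comm A C + comm B (C::'n::finite cmat)"
  by (simp add: comm_def matrix_add_ldistrib matrix_add_rdistrib)

lemma comm_diff_left: "comm (A - B) C = comm A C - comm B (C::'n::finite cmat)"
  by (simp add: comm_def matrix_diff_ldistrib matrix_diff_rdistrib)

lemma comm_scaleR_left: "comm (r *\<^sub>R A) C = r *\<^sub>R comm A (C::'n::finite cmat)"
  by (simp add: comm_def scalar_matrix_assoc[symmetric] matrix_scalar_ac scaleR_diff_right)

lemma comm_csmul_left: "comm (csmul c A) C = csmul c (comm A (C::'n::finite cmat))"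
  unfolding comm_def matrix_mult_csmul_left matrix_mult_csmul_right
  by (simp add: csmul_def vec_eq_iff algebra_simps)

lemma comm_anticommute: "comm A B = - comm B (A::'n::finite cmat)"
  by (simp add: comm_def)

lemma cadj_comm: "cadj (comm A B) = comm (cadj B) (cadj (A::'n::finite cmat))"
  by (simp add: comm_def cadj_diff cadj_matrix_mult)

lemma comm_matpow: "comm (matpow J k) J = 0"
  by (simp add: comm_def matpow_commute)

lemma comm_csmul_matpow: "comm (csmul c (matpow J k)) J = 0"
  by (simp add: comm_csmul_left comm_matpow)

lemma ip_comm: "ip (comm A B) C = ip A (comm B (C::'n::finite cmat))"
proof -
  have "trace ((B ** A) ** C) = trace (A ** (C ** B))"
    by (metis matrix_mul_assoc trace_mul_sym)
  then show ?thesis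
    by (simp add: ip_def mtrace_eq_trace comm_def matrix_diff_rdistrib matrix_diff_ldistrib
        trace_sub matrix_mul_assoc)
qed

lemma ip_comm_rotate: "ip (comm J Y) Z = ip Y (comm Z (J::'n::finite cmat))"
  by (metis ip_comm ip_commute)

lemma coth_minus: "coth (- x) = - coth x"
  by (simp add: coth_def)

lemma Rq_nth: "Rq q X $ i $ j = (if i = j then 0 else X $ i $ j * complex_of_real (coth (q $ i - q $ j)))"
  by (simp add: Rq_def)

lemma Rq_zero [simp]: "Rq q 0 = 0"
  by (simp add: Rq_def vec_eq_iff)

lemma Rq_add: "Rq q (A + B) = Rq q A + Rq q B"
  by (simp add: Rq_def vec_eq_iff algebra_simps)

lemma Rq_scaleR: "Rq q (r *\<^sub>R A) = r *\<^sub>R Rq q A"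
  by (simp add: Rq_def vec_eq_iff)

lemma Rq_csmul: "Rq q (csmul c A) = csmul c (Rq q A)"
  by (simp add: Rq_def csmul_def vec_eq_iff)

text \<open>\<open>R(q)\<close> is skew for the pairing and anticommutes with the adjoint, both because
  \<open>coth\<close> is odd.\<close>

lemma ip_Rq: "ip (Rq q X) Y = - ip X (Rq q Y)"
proof -
  have "Rq q X $ i $ k * Y $ k $ i = - (X $ i $ k * Rq q Y $ k $ i)" for i k
    using coth_minus[of "q $ k - q $ i"] by (simp add: Rq_nth)
  then have "trace (Rq q X ** Y) = - trace (X ** Rq q Y)"
    by (simp add: trace_def matrix_matrix_mult_def sum_negf)
  then show ?thesis
    by (simp add: ip_def mtrace_eq_trace)
qed

lemma cadj_Rq: "cadj (Rq q X) = - Rq q (cadj X)"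
proof -
  have "cadj (Rq q X) $ i $ j = - Rq q (cadj X) $ i $ j" for i j
    using coth_minus[of "q $ i - q $ j"] by (simp add: Rq_nth cadj_def)
  then show ?thesis
    by (simp add: vec_eq_iff)
qed

lemma cadj_comm_Rq: "cadj (comm (Rq q X) Y) = comm (Rq q (cadj X)) (cadj Y)"
proof -
  have "comm (cadj Y) (- Rq q (cadj X)) = comm (Rq q (cadj X)) (cadj Y)"
    using comm_scaleR_left[of "-1" "Rq q (cadj X)" "cadj Y"] comm_anticommute[of "cadj Y"]
    by simp
  then show ?thesis
    by (simp add: cadj_comm cadj_Rq)
qed

lemma cadj_comm_hermitian: "cadj A = A \<Longrightarrow> cadj B = B \<Longrightarrow> cadj (comm A B) = - comm A B"
  by (simp add: cadj_comm comm_anticommute[of B])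

lemma cadj_comm_antihermitian: "cadj A = - A \<Longrightarrow> cadj B = - B \<Longrightarrow> cadj (comm A B) = - comm A B"
  using comm_scaleR_left[of "-1" B "- A"] comm_scaleR_left[of "-1" A B]
  by (simp add: cadj_comm comm_anticommute[of B])

lemma ip_Hp_left_antihermitian: "cadj Z = - Z \<Longrightarrow> ip (Hp J) Z = ip J Z"
  by (simp add: ip_Hp_right[symmetric] Hp_antihermitian)

section \<open>Hamiltonian vector fields of spectral invariants\<close>

definition lax_rhs :: "real^'n::finite \<Rightarrow> 'n cmat \<Rightarrow> 'n cmat \<Rightarrow> 'n cmat" where
  "lax_rhs q J \<Phi> = comm (Rq q (Hm \<Phi>) - Hp \<Phi>) J"

lemma ip_Rq_Hp_comm: "ip (Rq q (Hp (comm Y J))) (Hm \<Phi>) = ip Y (comm (Rq q (Hm \<Phi>)) J)"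
proof -
  have R_antihermitian: "Hp (Rq q (Hm \<Phi>)) = Rq q (Hm \<Phi>)"
    by (rule Hp_antihermitian) (simp add: cadj_Rq cadj_Hm)
  have "ip (Rq q (Hp (comm Y J))) (Hm \<Phi>) = - ip (comm Y J) (Hp (Rq q (Hm \<Phi>)))"
    by (simp add: ip_Rq ip_Hp_right)
  also have "\<dots> = - ip Y (comm J (Rq q (Hm \<Phi>)))"
    by (simp add: R_antihermitian ip_comm)
  also have "\<dots> = ip Y (comm (Rq q (Hm \<Phi>)) J)"
    by (simp add: comm_anticommute[of J] ip_minus_right)
  finally show ?thesis .
qed

lemma commuting_comm_Hm: "comm \<Phi> J = 0 \<Longrightarrow> comm (Hm \<Phi>) J = - comm (Hp \<Phi>) J"
  using comm_add_left[of "Hp \<Phi>" "Hm \<Phi>" J] by (simp add: Hp_Hm) (metis add.commute eq_neg_iff_add_eq_0)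

lemma ip_Hp_comm_parts:
  assumes "comm \<Phi> J = 0"
  shows "ip (Hp J) (comm (Hm Y) (Hm \<Phi>) - comm (Hp Y) (Hp \<Phi>)) = - ip Y (comm (Hp \<Phi>) J)"
proof -
  have "ip (Hp J) (comm (Hm Y) (Hm \<Phi>)) = ip (Hm Y) (comm (Hm \<Phi>) J)"
    by (simp add: ip_Hp_left_antihermitian cadj_comm_hermitian cadj_Hm ip_commute[of J] ip_comm)
  also have "\<dots> = - ip (Hm Y) (comm (Hp \<Phi>) J)"
    by (simp add: commuting_comm_Hm[OF assms] ip_minus_right)
  finally have Hm_part: "ip (Hp J) (comm (Hm Y) (Hm \<Phi>)) = - ip (Hm Y) (comm (Hp \<Phi>) J)" .
  have Hp_part: "ip (Hp J) (comm (Hp Y) (Hp \<Phi>)) = ip (Hp Y) (comm (Hp \<Phi>) J)"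
    by (simp add: ip_Hp_left_antihermitian cadj_comm_antihermitian cadj_Hp ip_commute[of J] ip_comm)
  have "ip (Hp Y) (comm (Hp \<Phi>) J) + ip (Hm Y) (comm (Hp \<Phi>) J) = ip Y (comm (Hp \<Phi>) J)"
    using ip_add_left[of "Hp Y" "Hm Y" "comm (Hp \<Phi>) J"] by (simp add: Hp_Hm)
  then show ?thesis
    using Hm_part Hp_part by (simp add: ip_diff_right)
qed

lemma red_bracket1_commuting:
  assumes "nabla1 h p = 0" "d2 h p = \<Phi>" "comm \<Phi> (snd p) = 0"
  shows "red_bracket1 f h p
    = ip (nabla1 f p) (diagmat (diagvec \<Phi>)) + ip (d2 f p) (lax_rhs (fst p) (snd p) \<Phi>)"
proof -
  obtain q J where p: "p = (q, J)"
    by (cases p)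
  have "red_bracket1 f h p = ip (nabla1 f p) (Hm0 \<Phi>) + ip (Rq q (Hp (comm (d2 f p) J))) (Hm \<Phi>)
      + ip (Hp J) (comm (Hm (d2 f p)) (Hm \<Phi>) - comm (Hp (d2 f p)) (Hp \<Phi>))"
    using assms by (simp add: red_bracket1_def p)
  moreover have "ip (Hp J) (comm (Hm (d2 f p)) (Hm \<Phi>) - comm (Hp (d2 f p)) (Hp \<Phi>))
      = - ip (d2 f p) (comm (Hp \<Phi>) J)"
    using assms(3) by (simp add: p ip_Hp_comm_parts)
  ultimately show ?thesis
    by (simp add: p ip_Rq_Hp_comm Hm0_eq_diagmat lax_rhs_def comm_diff_left ip_diff_right)
qed

text \<open>In the second bracket \<open>\<nabla>\<^sub>2h = \<nabla>\<^sub>2'h = \<Phi>\<close>, so its last four terms collapse to one.\<close>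

lemma ip_nabla2_terms_commuting:
  assumes "comm \<Phi> J = 0"
  shows "ip (Hm (J ** Y)) (Hm \<Phi>) + ip (Hp (Y ** J)) (Hp \<Phi>)
      - ip (Hm (Y ** J)) (Hm \<Phi>) - ip (Hp (J ** Y)) (Hp \<Phi>) = - 2 * ip Y (comm (Hp \<Phi>) J)"
proof -
  have "ip (Hm (J ** Y)) (Hm \<Phi>) + ip (Hp (Y ** J)) (Hp \<Phi>)
      - ip (Hm (Y ** J)) (Hm \<Phi>) - ip (Hp (J ** Y)) (Hp \<Phi>)
      = ip (comm J Y) (Hm \<Phi>) - ip (comm J Y) (Hp \<Phi>)"
    by (simp add: ip_Hm_right[symmetric] ip_Hp_right[symmetric] comm_def ip_diff_left)
  also have "\<dots> = ip Y (comm (Hm \<Phi>) J) - ip Y (comm (Hp \<Phi>) J)"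
    by (simp add: ip_comm_rotate)
  finally show ?thesis
    by (simp add: commuting_comm_Hm[OF assms] ip_minus_right)
qed

lemma red_bracket2_commuting:
  assumes "nabla1 h p = 0" "d2 h p = \<Psi>" "comm \<Psi> (snd p) = 0"
  shows "red_bracket2 f h p = ip (nabla1 f p) (diagmat (diagvec (snd p ** \<Psi>)))
    + ip (d2 f p) (lax_rhs (fst p) (snd p) (snd p ** \<Psi>))"
proof -
  obtain q J where p: "p = (q, J)"
    by (cases p)
  define \<Phi> where "\<Phi> = J ** \<Psi>"
  define Y where "Y = d2 f p"
  have \<Psi>_J: "\<Psi> ** J = \<Phi>"
    using assms(3) by (simp add: comm_def p \<Phi>_def)
  then have \<Phi>_J: "comm \<Phi> J = 0"
    by (simp add: comm_def \<Phi>_def matrix_mul_assoc[symmetric])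
  have "red_bracket2 f h p = (1/2) * (ip (nabla1 f p) (Hm0 (\<Phi> + \<Phi>))
      + ip (Rq q (Hp (comm Y J))) (Hm (\<Phi> + \<Phi>))
      + (ip (Hm (J ** Y)) (Hm \<Phi>) + ip (Hp (Y ** J)) (Hp \<Phi>)
      - ip (Hm (Y ** J)) (Hm \<Phi>) - ip (Hp (J ** Y)) (Hp \<Phi>)))"
    using assms \<Psi>_J by (simp add: red_bracket2_def nabla2_def nabla2'_def p \<Phi>_def Y_def)
  also have "\<dots> = ip (nabla1 f p) (Hm0 \<Phi>) + ip Y (comm (Rq q (Hm \<Phi>)) J) - ip Y (comm (Hp \<Phi>) J)"
    unfolding ip_nabla2_terms_commuting[OF \<Phi>_J] Hm_add Hm0_add ip_add_right ip_Rq_Hp_comm by simp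
  finally show ?thesis
    by (simp add: p Hm0_eq_diagmat lax_rhs_def comm_diff_left ip_diff_right \<Phi>_def Y_def)
qed

lemma d2_eqI:
  assumes "\<And>X. ip Y X = deriv (\<lambda>t. f (fst p, snd p + t *\<^sub>R X)) 0"
  shows "d2 f p = Y"
  unfolding d2_def
proof (rule the_equality)
  fix Y' assume "\<forall>X. ip Y' X = deriv (\<lambda>t. f (fst p, snd p + t *\<^sub>R X)) 0"
  then show "Y' = Y"
    using assms by (intro ip_eq_imp_eq) simp
qed (use assms in simp)

lemma nabla1_eqI:
  assumes "Y \<in> G0m" "\<And>X. X \<in> G0m \<Longrightarrow> ip Y X = deriv (\<lambda>t. f (fst p + t *\<^sub>R diagvec X, snd p)) 0"
  shows "nabla1 f p = Y"
  unfolding nabla1_def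
proof (rule the_equality)
  fix Y' assume "Y' \<in> G0m \<and> (\<forall>X\<in>G0m. ip Y' X = deriv (\<lambda>t. f (fst p + t *\<^sub>R diagvec X, snd p)) 0)"
  then show "Y' = Y"
    using assms by (intro G0m_ip_eq_imp_eq) simp_all
qed (use assms in simp)

lemma nabla1_eq_0:
  assumes "\<And>q q' J. f (q, J) = f (q', J)"
  shows "nabla1 f p = 0"
proof (rule nabla1_eqI)
  show "0 \<in> G0m"
    by (simp add: G0m_def)
  fix X :: "'a cmat"
  have "(\<lambda>t. f (fst p + t *\<^sub>R diagvec X, snd p)) = (\<lambda>t. f p)"
    using assms by (metis prod.collapse)
  then show "ip 0 X = deriv (\<lambda>t. f (fst p + t *\<^sub>R diagvec X, snd p)) 0"
    by simp
qed

lemma Ck_on_const: "Ck_on k S (\<lambda>x. c)"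
proof (induction k arbitrary: c)
  case (Suc k)
  have "frechet_derivative (\<lambda>x. c) (at x) = (\<lambda>h. 0)" for x
    by (metis frechet_derivative_at has_derivative_const)
  then show ?case
    using Suc by simp
qed simp

lemma smooth_on_bounded_linear:
  assumes "bounded_linear f"
  shows "smooth_on S f"
  unfolding smooth_on_def
proof
  fix k
  show "Ck_on k S f"
  proof (cases k)
    case (Suc k')
    have "frechet_derivative f (at x) = f" for x
      using assms by (metis frechet_derivative_at bounded_linear_imp_has_derivative)
    then show ?thesis
      using assms Suc by (simp add: Ck_on_const bounded_linear_imp_differentiable)
  qed (simp add: assms linear_continuous_on)
qed

text \<open>The coordinates \<open>q\<^sub>j\<close> and the linear functions \<open>\<langle>A, J\<rangle>\<close> separate tangent vectors.\<close>

lemma smooth_on_coordinate: "smooth_on S (\<lambda>p::'n::finite point. fst p $ j)"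
  by (rule smooth_on_bounded_linear, subst linear_conv_bounded_linear[symmetric])
     (auto intro!: linearI)

lemma smooth_on_ip_snd: "smooth_on S (\<lambda>p::'n::finite point. ip A (snd p))"
  by (rule smooth_on_bounded_linear, subst linear_conv_bounded_linear[symmetric])
     (auto intro!: linearI simp: ip_add_right ip_scaleR_right)

definition diag_unit :: "'n::finite \<Rightarrow> 'n cmat" where
  "diag_unit j = diagmat (axis j 1)"

lemma ip_diag_unit_diagmat: "ip (diag_unit j) (diagmat v) = v $ j"
proof -
  have "axis j 1 $ i * v $ i = (if i = j then v $ j else 0)" for i
    by (simp add: axis_def)
  then show ?thesis
    by (simp add: diag_unit_def ip_diagmat)
qed

lemma nabla1_coordinate: "nabla1 (\<lambda>p. fst p $ j) p = diag_unit j"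
proof (rule nabla1_eqI)
  show "diag_unit j \<in> G0m"
    by (simp add: diag_unit_def G0m_def diagmat_def)
  fix X :: "'a cmat" assume X: "X \<in> G0m"
  have "((\<lambda>t. fst p $ j + t * diagvec X $ j) has_real_derivative diagvec X $ j) (at 0)"
    by (auto intro!: derivative_eq_intros)
  then show "ip (diag_unit j) X = deriv (\<lambda>t. fst (fst p + t *\<^sub>R diagvec X, snd p) $ j) 0"
    using G0m_eq_diagmat[OF X] ip_diag_unit_diagmat[of j "diagvec X"]
    by (simp add: DERIV_imp_deriv)
qed

lemma d2_coordinate: "d2 (\<lambda>p. fst p $ j) p = 0"
  by (rule d2_eqI) simp

lemma nabla1_ip_snd: "nabla1 (\<lambda>p. ip A (snd p)) p = 0"
  by (rule nabla1_eq_0) simp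

lemma d2_ip_snd: "d2 (\<lambda>p. ip A (snd p)) p = A"
proof (rule d2_eqI)
  fix X
  have "((\<lambda>t. ip A (snd p) + t * ip A X) has_real_derivative ip A X) (at 0)"
    by (auto intro!: derivative_eq_intros)
  then show "ip A X = deriv (\<lambda>t. ip A (snd (fst p, snd p + t *\<^sub>R X))) 0"
    by (simp add: ip_add_right ip_scaleR_right DERIV_imp_deriv)
qed

lemma is_ham_vf_iff:
  fixes h :: "'n::{finite,linorder} point \<Rightarrow> real"
  assumes bracket: "\<And>f p. p \<in> M0reg \<Longrightarrow>
    red_bracket i f h p = ip (nabla1 f p) (diagmat (Eq' p)) + ip (d2 f p) (EJ' p)"
  shows "is_ham_vf i h Eq EJ \<longleftrightarrow> (\<forall>p\<in>M0reg. Eq p = Eq' p \<and> EJ p = EJ' p)"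
proof
  assume ham: "is_ham_vf i h Eq EJ"
  show "\<forall>p\<in>M0reg. Eq p = Eq' p \<and> EJ p = EJ' p"
  proof
    fix p :: "'n point" assume p: "p \<in> M0reg"
    have vf: "vf_apply Eq EJ f p = red_bracket i f h p" if "smooth_on M0reg f" for f
      using ham p that by (simp add: is_ham_vf_def)
    have "Eq p $ j = Eq' p $ j" for j
      using vf[OF smooth_on_coordinate] bracket[OF p, of "\<lambda>p. fst p $ j"]
      by (simp add: vf_apply_def nabla1_coordinate d2_coordinate ip_diag_unit_diagmat)
    moreover have "ip A (EJ p) = ip A (EJ' p)" for A
      using vf[OF smooth_on_ip_snd] bracket[OF p, of "\<lambda>p. ip A (snd p)"]
      by (simp add: vf_apply_def nabla1_ip_snd d2_ip_snd)
    then have "EJ p = EJ' p"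
      by (metis ip_commute ip_eq_imp_eq)
    ultimately show "Eq p = Eq' p \<and> EJ p = EJ' p"
      by (simp add: vec_eq_iff)
  qed
next
  assume "\<forall>p\<in>M0reg. Eq p = Eq' p \<and> EJ p = EJ' p"
  then show "is_ham_vf i h Eq EJ"
    by (simp add: is_ham_vf_def vf_apply_def bracket)
qed

lemma bounded_bilinear_matrix_mult: "bounded_bilinear (\<lambda>(A::'n::finite cmat) (B::'n cmat). A ** B)"
  by (subst bilinear_conv_bounded_bilinear[symmetric])
    (auto simp: bilinear_def matrix_add_ldistrib matrix_add_rdistrib matrix_scalar_ac
      scalar_matrix_assoc[symmetric] intro!: linearI)

fun matpow_deriv :: "'n::finite cmat \<Rightarrow> 'n cmat \<Rightarrow> nat \<Rightarrow> 'n cmat" where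
  "matpow_deriv J X 0 = 0"
| "matpow_deriv J X (Suc m) = J ** matpow_deriv J X m + X ** matpow J m"

lemma has_vector_derivative_matpow:
  "((\<lambda>t. matpow (J + t *\<^sub>R X) m) has_vector_derivative matpow_deriv J X m) (at 0)"
proof (induction m)
  case (Suc m)
  have "((\<lambda>t::real. J + t *\<^sub>R X) has_vector_derivative X) (at 0)"
    by (auto intro!: derivative_eq_intros)
  from bounded_bilinear.has_vector_derivative[OF bounded_bilinear_matrix_mult this Suc.IH]
  show ?case
    by (simp add: matpow_Suc)
qed simp

lemma trace_matpow_deriv:
  "trace (matpow J a ** matpow_deriv J X m) = of_nat m * trace (matpow J (a + m - 1) ** X)"
proof (induction m arbitrary: a)
  case 0
  then show ?case
    by (simp add: trace_def)
next
  case (Suc m)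
  have J_shift: "trace (matpow J a ** (J ** matpow_deriv J X m))
      = trace (matpow J (a + 1) ** matpow_deriv J X m)"
    by (simp add: matrix_mul_assoc matpow_Suc')
  have "trace (matpow J a ** (X ** matpow J m)) = trace ((matpow J m ** matpow J a) ** X)"
    by (metis matrix_mul_assoc trace_mul_sym)
  then have X_term: "trace (matpow J a ** (X ** matpow J m)) = trace (matpow J (a + m) ** X)"
    by (simp add: matpow_add[symmetric] add.commute)
  show ?case
  proof (cases m)
    case 0
    then show ?thesis
      by (simp add: matrix_add_ldistrib trace_add X_term)
  next
    case (Suc m')
    then have "a + 1 + m - 1 = a + m"
      by simp
    then show ?thesis
      using Suc.IH[of "a + 1"]
      by (simp add: matrix_add_ldistrib trace_add J_shift X_term algebra_simps)
  qed
qed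

definition trace_power_ham :: "complex \<Rightarrow> nat \<Rightarrow> 'n::finite point \<Rightarrow> real" where
  "trace_power_ham c k p = Re (c * mtrace (matpow (snd p) k)) / real k"

lemma hk_eq_trace_power_ham: "hk k = trace_power_ham 1 k"
  by (simp add: fun_eq_iff hk_def trace_power_ham_def)

lemma htk_eq_trace_power_ham: "htk k = trace_power_ham (- \<i>) k"
  by (simp add: fun_eq_iff htk_def trace_power_ham_def)

lemma nabla1_trace_power_ham: "nabla1 (trace_power_ham c m) p = 0"
  by (rule nabla1_eq_0) (simp add: trace_power_ham_def)

lemma d2_trace_power_ham:
  assumes "m \<ge> 1"
  shows "d2 (trace_power_ham c m) p = csmul c (matpow (snd p) (m - 1))"
proof (rule d2_eqI)
  fix X
  have "bounded_linear (\<lambda>M::'a cmat. Re (c * trace M) / real m)"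
    by (subst linear_conv_bounded_linear[symmetric])
      (auto intro!: linearI simp: trace_add trace_scaleR add_divide_distrib diff_divide_distrib
        algebra_simps)
  from bounded_linear.has_vector_derivative[OF this has_vector_derivative_matpow]
  have "deriv (\<lambda>t. trace_power_ham c m (fst p, snd p + t *\<^sub>R X)) 0
      = Re (c * trace (matpow_deriv (snd p) X m)) / real m"
    by (simp add: trace_power_ham_def mtrace_eq_trace DERIV_imp_deriv
        flip: has_real_derivative_iff_has_vector_derivative)
  also have "\<dots> = ip (csmul c (matpow (snd p) (m - 1))) X"
    using trace_matpow_deriv[of "snd p" 0 X m] assms
    by (simp add: ip_def mtrace_eq_trace matrix_mult_csmul_left trace_csmul field_simps)
  finally show "ip (csmul c (matpow (snd p) (m - 1))) X
      = deriv (\<lambda>t. trace_power_ham c m (fst p, snd p + t *\<^sub>R X)) 0"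
    by simp
qed

lemma is_ham_vf_trace_power_ham_iff:
  assumes "K \<ge> 1" "i \<in> {1, 2}"
  shows "is_ham_vf i (trace_power_ham c (if i = 2 then K else K + 1)) Eq EJ \<longleftrightarrow>
    (\<forall>q J. (q, J) \<in> M0reg \<longrightarrow> Eq (q, J) = diagvec (csmul c (matpow J K))
      \<and> EJ (q, J) = lax_rhs q J (csmul c (matpow J K)))"
proof -
  have "red_bracket i f (trace_power_ham c (if i = 2 then K else K + 1)) p
    = ip (nabla1 f p) (diagmat (diagvec (csmul c (matpow (snd p) K))))
      + ip (d2 f p) (lax_rhs (fst p) (snd p) (csmul c (matpow (snd p) K)))"
    for f and p :: "'a point"
  proof (cases "i = 2")
    case True
    have "snd p ** csmul c (matpow (snd p) (K - 1)) = csmul c (matpow (snd p) K)"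
      using assms(1) by (cases K) (simp_all add: matpow_Suc matrix_mult_csmul_right)
    then show ?thesis
      using True red_bracket2_commuting[OF nabla1_trace_power_ham d2_trace_power_ham[OF assms(1)]
          comm_csmul_matpow, where f = f and p = p]
      by (simp add: red_bracket_def)
  next
    case False
    have "d2 (trace_power_ham c (K + 1)) p = csmul c (matpow (snd p) K)"
      using d2_trace_power_ham[of "K + 1"] by simp
    then show ?thesis
      using False assms red_bracket1_commuting[OF nabla1_trace_power_ham _ comm_csmul_matpow]
      by (simp add: red_bracket_def)
  qed
  then show ?thesis
    by (subst is_ham_vf_iff) auto
qed

lemma is_ham_vf_trace_power_ham_at:
  assumes "is_ham_vf i (trace_power_ham c (if i = 2 then K else K + 1)) Eq EJ"
    and "K \<ge> 1" "i \<in> {1, 2}" "(q, J) \<in> M0reg"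
  shows "Eq (q, J) = diagvec (csmul c (matpow J K))"
    and "EJ (q, J) = lax_rhs q J (csmul c (matpow J K))"
  using assms is_ham_vf_trace_power_ham_iff[of K i c Eq EJ] by auto

subsection \<open>Restrictions to the Hermitian and anti-Hermitian loci\<close>

lemma lax_rhs_eq_half:
  "lax_rhs q J \<Phi> = (1/2::real) *\<^sub>R comm (Rq q (\<Phi> + cadj \<Phi>) + (cadj \<Phi> - \<Phi>)) J"
proof -
  have "Rq q (Hm \<Phi>) - Hp \<Phi> = (1/2::real) *\<^sub>R (Rq q (\<Phi> + cadj \<Phi>) + (cadj \<Phi> - \<Phi>))"
    by (simp add: Hm_def Hp_def Rq_scaleR Rq_add algebra_simps)
  then show ?thesis
    by (simp add: lax_rhs_def comm_scaleR_left)
qed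

lemma lax_rhs_hermitian: "cadj \<Phi> = \<Phi> \<Longrightarrow> lax_rhs q J \<Phi> = comm (Rq q \<Phi>) J"
  by (simp add: lax_rhs_def Hm_hermitian Hp_eq_0_iff[THEN iffD2])

lemma lax_rhs_antihermitian: "cadj \<Phi> = - \<Phi> \<Longrightarrow> comm \<Phi> J = 0 \<Longrightarrow> lax_rhs q J \<Phi> = 0"
  by (simp add: lax_rhs_def Hm_eq_0_iff[THEN iffD2] Hp_antihermitian comm_scaleR_left[of "-1", simplified])

lemma cadj_lax_rhs_hermitian:
  assumes "cadj \<Phi> = \<Phi>" "cadj J = s *\<^sub>R J"
  shows "cadj (lax_rhs q J \<Phi>) = s *\<^sub>R lax_rhs q J \<Phi>"
proof -
  have "comm (Rq q \<Phi>) (s *\<^sub>R J) = s *\<^sub>R comm (Rq q \<Phi>) J"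
    by (simp add: comm_def matrix_scalar_ac scalar_matrix_assoc[symmetric] scaleR_diff_right)
  then show ?thesis
    using assms by (simp add: lax_rhs_hermitian cadj_comm_Rq)
qed

lemma matpow_scaleR: "matpow (s *\<^sub>R X) k = (s ^ k) *\<^sub>R matpow (X::'n::finite cmat) k"
  by (induction k) (simp_all add: matpow_Suc scalar_matrix_assoc[symmetric] matrix_scalar_ac)

lemma cadj_matpow_hermitian: "cadj J = J \<Longrightarrow> cadj (matpow J k) = matpow J k"
  by (simp add: cadj_matpow)

lemma cadj_matpow_antihermitian_even: "cadj J = - J \<Longrightarrow> even k \<Longrightarrow> cadj (matpow J k) = matpow J k"
  using matpow_scaleR[of "-1" J k] by (simp add: cadj_matpow)

lemma cadj_matpow_antihermitian_odd: "cadj J = - J \<Longrightarrow> odd k \<Longrightarrow> cadj (matpow J k) = - matpow J k"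
  using matpow_scaleR[of "-1" J k] by (simp add: cadj_matpow)

lemma cadj_csmul_minus_i_hermitian: "cadj X = X \<Longrightarrow> cadj (csmul (- \<i>) X) = - csmul (- \<i>) X"
  by (simp add: cadj_csmul) (simp add: csmul_def vec_eq_iff)

lemma cadj_csmul_minus_i_antihermitian: "cadj X = - X \<Longrightarrow> cadj (csmul (- \<i>) X) = csmul (- \<i>) X"
  by (simp add: cadj_csmul) (simp add: csmul_def vec_eq_iff)

lemma cadj_matpow_antihermitian:
  "cadj J = - J \<Longrightarrow> cadj (matpow J k) = matpow J k \<or> cadj (matpow J k) = - matpow J k"
  using cadj_matpow_antihermitian_even cadj_matpow_antihermitian_odd by blast

lemma Hm_lax_rhs_antihermitian:
  assumes "cadj J = - J" "comm \<Phi> J = 0" "cadj \<Phi> = \<Phi> \<or> cadj \<Phi> = - \<Phi>"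
  shows "Hm (lax_rhs q J \<Phi>) = 0"
  using assms cadj_lax_rhs_hermitian[of \<Phi> J "-1" q] lax_rhs_antihermitian[of \<Phi> J q]
  by (auto simp: Hm_eq_0_iff)

lemma Hp_lax_rhs_antihermitian:
  assumes "cadj J = - J" "cadj \<Phi> = \<Phi>"
  shows "Hp (lax_rhs q J \<Phi>) = comm (Rq q \<Phi>) J"
  using assms cadj_lax_rhs_hermitian[of \<Phi> J "-1" q]
  by (simp add: Hp_antihermitian lax_rhs_hermitian)

lemma is_ham_vf_hk_restrict:
  assumes "is_ham_vf i (hk (if i = 2 then K else K + 1)) Eq EJ" "K \<ge> 1" "i \<in> {1, 2}"
  shows "(\<forall>q J. (q, J) \<in> M0reg \<and> Hp J = 0 \<longrightarrow>
          Hp (EJ (q, J)) = 0 \<and>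
          (\<forall>j. complex_of_real (Eq (q, J) $ j) = matpow (Hm J) K $ j $ j) \<and>
          Hm (EJ (q, J)) = comm (Rq q (matpow (Hm J) K)) (Hm J))
    \<and> (\<forall>q J. (q, J) \<in> M0reg \<and> Hm J = 0 \<longrightarrow> Hm (EJ (q, J)) = 0)"
proof (intro conjI allI impI; elim conjE)
  fix q :: "real^'a::{finite,linorder}" and J :: "'a cmat"
  assume qJ: "(q, J) \<in> M0reg"
  note field = is_ham_vf_trace_power_ham_at[OF assms(1)[unfolded hk_eq_trace_power_ham] assms(2,3) qJ,
      simplified]
  {
    assume "Hp J = 0"
    then have J: "cadj J = J"
      by (simp add: Hp_eq_0_iff)
    have \<Phi>: "cadj (matpow J K) = matpow J K"
      using J by (rule cadj_matpow_hermitian)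
    have "cadj (EJ (q, J)) = EJ (q, J)"
      using field(2) cadj_lax_rhs_hermitian[OF \<Phi>, of J 1] J by simp
    then show "Hp (EJ (q, J)) = 0" "Hm (EJ (q, J)) = comm (Rq q (matpow (Hm J) K)) (Hm J)"
      using field(2) \<Phi> J by (simp_all add: Hp_eq_0_iff Hm_hermitian lax_rhs_hermitian)
    show "complex_of_real (Eq (q, J) $ j) = matpow (Hm J) K $ j $ j" for j
      using field(1) \<Phi> J by (simp add: diagvec_def hermitian_diag_real Hm_hermitian)
  next
    assume "Hm J = 0"
    then have J: "cadj J = - J"
      by (simp add: Hm_eq_0_iff)
    then show "Hm (EJ (q, J)) = 0"
      using field(2) Hm_lax_rhs_antihermitian[OF J comm_matpow cadj_matpow_antihermitian[OF J]]
      by simp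
  }
qed

lemma is_ham_vf_htk_restrict:
  assumes "is_ham_vf i (htk (if i = 2 then K else K + 1)) Eq EJ" "K \<ge> 1" "i \<in> {1, 2}"
  shows "(\<forall>q J. (q, J) \<in> M0reg \<and> Hp J = 0 \<longrightarrow> Eq (q, J) = 0 \<and> EJ (q, J) = 0)
    \<and> (\<forall>q J. (q, J) \<in> M0reg \<and> Hm J = 0 \<longrightarrow> Hm (EJ (q, J)) = 0)"
proof (intro conjI allI impI; elim conjE)
  fix q :: "real^'a::{finite,linorder}" and J :: "'a cmat"
  assume qJ: "(q, J) \<in> M0reg"
  note field = is_ham_vf_trace_power_ham_at[OF assms(1)[unfolded htk_eq_trace_power_ham] assms(2,3) qJ]
  {
    assume "Hp J = 0"
    then have "cadj (csmul (- \<i>) (matpow J K)) = - csmul (- \<i>) (matpow J K)"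
      by (simp add: Hp_eq_0_iff cadj_matpow_hermitian cadj_csmul_minus_i_hermitian)
    then show "Eq (q, J) = 0" "EJ (q, J) = 0"
      using field by (simp_all add: antihermitian_diagvec lax_rhs_antihermitian comm_csmul_matpow)
  next
    assume "Hm J = 0"
    then have J: "cadj J = - J"
      by (simp add: Hm_eq_0_iff)
    have "cadj (csmul (- \<i>) (matpow J K)) = csmul (- \<i>) (matpow J K)
      \<or> cadj (csmul (- \<i>) (matpow J K)) = - csmul (- \<i>) (matpow J K)"
      using cadj_matpow_antihermitian[OF J, of K]
        cadj_csmul_minus_i_hermitian cadj_csmul_minus_i_antihermitian by blast
    then show "Hm (EJ (q, J)) = 0"
      using field(2) Hm_lax_rhs_antihermitian[OF J comm_csmul_matpow] by simp
  }
qed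

lemma is_ham_vf_hk_odd_vanishes_on_antihermitian:
  assumes "is_ham_vf i (hk (if i = 2 then K else K + 1)) Eq EJ" "odd K" "i \<in> {1, 2}"
    and "(q, J) \<in> M0reg" "Hm J = 0"
  shows "Eq (q, J) = 0 \<and> EJ (q, J) = 0"
proof -
  have "K \<ge> 1"
    using assms(2) by (cases K) auto
  note field = is_ham_vf_trace_power_ham_at[OF assms(1)[unfolded hk_eq_trace_power_ham] this assms(3,4)]
  have "cadj (matpow J K) = - matpow J K"
    using assms(2,5) by (simp add: Hm_eq_0_iff cadj_matpow_antihermitian_odd)
  then show ?thesis
    using field by (simp add: antihermitian_diagvec lax_rhs_antihermitian comm_matpow)
qed

lemma is_ham_vf_htk_even_vanishes_on_antihermitian:
  assumes "is_ham_vf i (htk (if i = 2 then K else K + 1)) Eq EJ" "even K" "K \<ge> 1" "i \<in> {1, 2}"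
    and "(q, J) \<in> M0reg" "Hm J = 0"
  shows "Eq (q, J) = 0 \<and> EJ (q, J) = 0"
proof -
  note field = is_ham_vf_trace_power_ham_at[OF assms(1)[unfolded htk_eq_trace_power_ham] assms(3-5)]
  have "cadj (csmul (- \<i>) (matpow J K)) = - csmul (- \<i>) (matpow J K)"
    using assms(2,6)
    by (simp add: Hm_eq_0_iff cadj_matpow_antihermitian_even cadj_csmul_minus_i_hermitian)
  then show ?thesis
    using field by (simp add: antihermitian_diagvec lax_rhs_antihermitian comm_csmul_matpow)
qed

lemma is_ham_vf_hk_even_on_antihermitian:
  assumes "is_ham_vf i (hk (if i = 2 then K else K + 1)) Eq EJ" "even K" "K \<ge> 1" "i \<in> {1, 2}"
    and "(q, J) \<in> M0reg" "Hm J = 0"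
  shows "(\<forall>j. Eq (q, J) $ j = Re (matpow (Hp J) K $ j $ j))
    \<and> Hp (EJ (q, J)) = comm (Rq q (matpow (Hp J) K)) (Hp J)"
proof -
  note field = is_ham_vf_trace_power_ham_at[OF assms(1)[unfolded hk_eq_trace_power_ham] assms(3-5),
      simplified]
  have J: "cadj J = - J"
    using assms(6) by (simp add: Hm_eq_0_iff)
  show ?thesis
    using field J Hp_lax_rhs_antihermitian[OF J cadj_matpow_antihermitian_even[OF J assms(2)]]
    by (simp add: Hp_antihermitian diagvec_def)
qed

lemma is_ham_vf_htk_odd_on_antihermitian:
  assumes "is_ham_vf i (htk (if i = 2 then K else K + 1)) Eq EJ" "odd K" "i \<in> {1, 2}"
    and "(q, J) \<in> M0reg" "Hm J = 0"
  shows "(\<forall>j. Eq (q, J) $ j = Re (- \<i> * matpow (Hp J) K $ j $ j))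
    \<and> Hp (EJ (q, J)) = comm (csmul (- \<i>) (Rq q (matpow (Hp J) K))) (Hp J)"
proof -
  have "K \<ge> 1"
    using assms(2) by (cases K) auto
  note field = is_ham_vf_trace_power_ham_at[OF assms(1)[unfolded htk_eq_trace_power_ham] this assms(3,4)]
  have J: "cadj J = - J"
    using assms(5) by (simp add: Hm_eq_0_iff)
  have "cadj (csmul (- \<i>) (matpow J K)) = csmul (- \<i>) (matpow J K)"
    using cadj_matpow_antihermitian_odd[OF J assms(2)] by (rule cadj_csmul_minus_i_antihermitian)
  from Hp_lax_rhs_antihermitian[OF J this]
  have "Hp (EJ (q, J)) = comm (csmul (- \<i>) (Rq q (matpow (Hp J) K))) (Hp J)"
    using field(2) J by (simp add: Hp_antihermitian Rq_csmul)
  moreover have "Eq (q, J) $ j = Re (- \<i> * matpow (Hp J) K $ j $ j)" for j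
    using field(1) J by (simp add: Hp_antihermitian diagvec_def csmul_def)
  ultimately show ?thesis
    by simp
qed

lemma lax_rhs_csmul_minus_i:
  "lax_rhs q J (csmul (- \<i>) P)
    = (1/2::real) *\<^sub>R comm (csmul \<i> (Rq q (cadj P - P)) + csmul \<i> (P + cadj P)) J"
proof -
  have sum: "csmul (- \<i>) P + cadj (csmul (- \<i>) P) = csmul \<i> (cadj P - P)"
    and diff: "cadj (csmul (- \<i>) P) - csmul (- \<i>) P = csmul \<i> (P + cadj P)"
    by (simp_all add: cadj_csmul) (simp_all add: csmul_def vec_eq_iff algebra_simps)
  show ?thesis
    by (simp only: lax_rhs_eq_half sum diff Rq_csmul)
qed

lemma is_ham_vf_hk_iff:
  assumes "K \<ge> 1" "i \<in> {1, 2}"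
  shows "is_ham_vf i (hk (if i = 2 then K else K + 1)) Eq EJ \<longleftrightarrow>
    (\<forall>q J. (q, J) \<in> M0reg \<longrightarrow>
      (\<forall>j. Eq (q, J) $ j = Re (matpow J K $ j $ j)) \<and>
      EJ (q, J) = (1/2::real) *\<^sub>R comm (Rq q (matpow J K + cadj (matpow J K))
                                     + (cadj (matpow J K) - matpow J K)) J)"
  unfolding hk_eq_trace_power_ham is_ham_vf_trace_power_ham_iff[OF assms] lax_rhs_eq_half
  by (simp add: diagvec_def vec_eq_iff)

lemma is_ham_vf_htk_iff:
  assumes "K \<ge> 1" "i \<in> {1, 2}"
  shows "is_ham_vf i (htk (if i = 2 then K else K + 1)) Eq EJ \<longleftrightarrow>
    (\<forall>q J. (q, J) \<in> M0reg \<longrightarrow>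
      (\<forall>j. Eq (q, J) $ j = Re (- \<i> * matpow J K $ j $ j)) \<and>
      EJ (q, J) = (1/2::real) *\<^sub>R comm (csmul \<i> (Rq q (cadj (matpow J K) - matpow J K))
                                     + csmul \<i> (matpow J K + cadj (matpow J K))) J)"
proof -
  have "Eq (q, J) = diagvec (csmul (- \<i>) P) \<longleftrightarrow> (\<forall>j. Eq (q, J) $ j = Re (- \<i> * P $ j $ j))"
    for q J P
    by (simp add: diagvec_def csmul_def vec_eq_iff)
  then show ?thesis
    unfolding htk_eq_trace_power_ham is_ham_vf_trace_power_ham_iff[OF assms] lax_rhs_csmul_minus_i
    by simp
qed

theorem proposition3p8:
  fixes k l :: nat
  assumes "k \<ge> 1" and "l \<ge> 1"
  shows "\<forall>i\<in>{1::nat, 2}. \<forall>(Eq :: 'n::{finite,linorder} point \<Rightarrow> real^('n::{finite,linorder}))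
      (EJ :: 'n::{finite,linorder} point \<Rightarrow> 'n::{finite,linorder} cmat).
    \<comment> \<open>E^2_k = E^1_{k+1}: explicit formula\<close>
    (is_ham_vf i (hk (if i = 2 then k else k + 1)) Eq EJ \<longleftrightarrow>
       (\<forall>q J. (q, J) \<in> M0reg \<longrightarrow>
          (\<forall>j. Eq (q, J) $ j = Re (matpow J k $ j $ j)) \<and>
          EJ (q, J) = (1/2::real) *\<^sub>R comm (Rq q (matpow J k + cadj (matpow J k))
                                         + (cadj (matpow J k) - matpow J k)) J))
  \<and> \<comment> \<open>tilde E^2_k = tilde E^1_{k+1}: explicit formula\<close>
    (is_ham_vf i (htk (if i = 2 then k else k + 1)) Eq EJ \<longleftrightarrow>
       (\<forall>q J. (q, J) \<in> M0reg \<longrightarrow>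
          (\<forall>j. Eq (q, J) $ j = Re (- \<i> * matpow J k $ j $ j)) \<and>
          EJ (q, J) = (1/2::real) *\<^sub>R comm (csmul \<i> (Rq q (cadj (matpow J k) - matpow J k))
                                         + csmul \<i> (matpow J k + cadj (matpow J k))) J))
  \<and> \<comment> \<open>E: tangency to M_{0,-} and M_{0,+}, and the restriction V to M_{0,-}\<close>
    (is_ham_vf i (hk (if i = 2 then k else k + 1)) Eq EJ \<longrightarrow>
       (\<forall>q J. (q, J) \<in> M0reg \<and> Hp J = 0 \<longrightarrow>
          Hp (EJ (q, J)) = 0 \<and>
          (\<forall>j. complex_of_real (Eq (q, J) $ j) = matpow (Hm J) k $ j $ j) \<and>
          Hm (EJ (q, J)) = comm (Rq q (matpow (Hm J) k)) (Hm J)) \<and>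
       (\<forall>q J. (q, J) \<in> M0reg \<and> Hm J = 0 \<longrightarrow> Hm (EJ (q, J)) = 0))
  \<and> \<comment> \<open>tilde E: tangency, and the restriction to M_{0,-} vanishes\<close>
    (is_ham_vf i (htk (if i = 2 then k else k + 1)) Eq EJ \<longrightarrow>
       (\<forall>q J. (q, J) \<in> M0reg \<and> Hp J = 0 \<longrightarrow> Eq (q, J) = 0 \<and> EJ (q, J) = 0) \<and>
       (\<forall>q J. (q, J) \<in> M0reg \<and> Hm J = 0 \<longrightarrow> Hm (EJ (q, J)) = 0))
  \<and> \<comment> \<open>U^2_{2l-1} = U^1_{2l} = 0\<close>
    (is_ham_vf i (hk (if i = 2 then 2*l - 1 else 2*l)) Eq EJ \<longrightarrow>
       (\<forall>q J. (q, J) \<in> M0reg \<and> Hm J = 0 \<longrightarrow> Eq (q, J) = 0 \<and> EJ (q, J) = 0))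
  \<and> \<comment> \<open>tilde U^2_{2l} = tilde U^1_{2l+1} = 0\<close>
    (is_ham_vf i (htk (if i = 2 then 2*l else 2*l + 1)) Eq EJ \<longrightarrow>
       (\<forall>q J. (q, J) \<in> M0reg \<and> Hm J = 0 \<longrightarrow> Eq (q, J) = 0 \<and> EJ (q, J) = 0))
  \<and> \<comment> \<open>U^2_{2l} = U^1_{2l+1}\<close>
    (is_ham_vf i (hk (if i = 2 then 2*l else 2*l + 1)) Eq EJ \<longrightarrow>
       (\<forall>q J. (q, J) \<in> M0reg \<and> Hm J = 0 \<longrightarrow>
          (\<forall>j. Eq (q, J) $ j = Re (matpow (Hp J) (2*l) $ j $ j)) \<and>
          Hp (EJ (q, J)) = comm (Rq q (matpow (Hp J) (2*l))) (Hp J)))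
  \<and> \<comment> \<open>tilde U^2_{2l-1} = tilde U^1_{2l}\<close>
    (is_ham_vf i (htk (if i = 2 then 2*l - 1 else 2*l)) Eq EJ \<longrightarrow>
       (\<forall>q J. (q, J) \<in> M0reg \<and> Hm J = 0 \<longrightarrow>
          (\<forall>j. Eq (q, J) $ j = Re (- \<i> * matpow (Hp J) (2*l - 1) $ j $ j)) \<and>
          Hp (EJ (q, J)) = comm (csmul (- \<i>) (Rq q (matpow (Hp J) (2*l - 1)))) (Hp J)))"
proof -
  have odd: "odd (2 * l - 1)" and shift: "2 * l - 1 + 1 = 2 * l"
    and even: "even (2 * l)" and pos: "2 * l \<ge> 1"
    using assms(2) by auto
  show ?thesis
  proof (intro ballI allI conjI, goal_cases)
    case 1 then show ?case by (rule is_ham_vf_hk_iff[OF assms(1)])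
  next
    case 2 then show ?case by (rule is_ham_vf_htk_iff[OF assms(1)])
  next
    case 3 then show ?case using is_ham_vf_hk_restrict[OF _ assms(1)] by blast
  next
    case 4 then show ?case using is_ham_vf_htk_restrict[OF _ assms(1)] by blast
  next
    case 5 then show ?case
      using is_ham_vf_hk_odd_vanishes_on_antihermitian[OF _ odd, unfolded shift] by blast
  next
    case 6 then show ?case
      using is_ham_vf_htk_even_vanishes_on_antihermitian[OF _ even pos] by blast
  next
    case 7 then show ?case using is_ham_vf_hk_even_on_antihermitian[OF _ even pos] by blast
  next
    case 8 then show ?case
      using is_ham_vf_htk_odd_on_antihermitian[OF _ odd, unfolded shift] by blast
  qed
qed

end
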